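(* Let $X$ be a topological space and let $\mathcal P$ be a ring of open subsets of $X$ (closed under finite unions and finite intersections) which is closed under a winning strategy for Player I in the open-open game on $X$ and satisfies $\mathcal P\subseteq\mathcal P_{seq}$. Then $X/\mathcal P$ with the $\mathcal Q_{\mathcal P}$-topology is a completely regular space and the $\mathcal Q_{\mathcal P}$-map $q:X\to X/\mathcal P$ is skeletal.
   Context: For a family $\mathcal P$ of subsets of $X$: $[x]_{\mathcal P}=\{y: \forall V\in\mathcal P\ (x\in V\iff y\in V)\}$, $X/\mathcal P=\{[x]_{\mathcal P}:x\in X\}$, $q(x)=[x]_{\mathcal P}$ is the $\mathcal Q_{\mathcal P}$-map, and the $\mathcal Q_{\mathcal P}$-topology is the coarsest topology on $X/\mathcal P$ containing all $q[V]$, $V\in\mathcal P$. $\mathcal P_{seq}$ is the family of all sets $W$ for which there exist $\{U_n\}_{n\in\omega},\{V_n\}_{n\in\omega}\subseteq\mathcal P$ with $U_k\subseteq X\setminus V_k\subseteq U_{k+1}$ for all $k$ and $\bigcup_nU_n=W$. Open-open game: at inning $n$ Player I picks a non-empty open $A_n$, Player II a non-empty open $B_n\subseteq A_n$; Player I wins if $\bigcup_nB_n$ is dense. A strategy $\sigma$ for Player I assigns a non-empty open set to each finite sequence of non-empty open sets; it is winning if Player I wins every play with $A_0=\sigma(\emptyset)$, $A_{n+1}=\sigma(B_0,\dots,B_n)$. $\mathcal P$ is closed under $\sigma$ if $\sigma(\emptyset)\in\mathcal P$ and $\sigma(B_0,\dots,B_n)\in\mathcal P$ whenever $B_0,\dots,B_n$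 are non-empty members of $\mathcal P$. A continuous surjection $f$ is skeletal if for every non-empty open $U$ the closure of $f[U]$ has non-empty interior. *)

theory Defs
  imports "HOL-Analysis.Analysis"
begin

definition P_class :: "'a topology \<Rightarrow> 'a set set \<Rightarrow> 'a \<Rightarrow> 'a set" where
  "P_class X P x = {y \<in> topspace X. \<forall>V\<in>P. (x \<in> V \<longleftrightarrow> y \<in> V)}"

definition P_quotient :: "'a topology \<Rightarrow> 'a set set \<Rightarrow> 'a set set" where
  "P_quotient X P = P_class X P ` topspace X"

definition QP_topology :: "'a topology \<Rightarrow> 'a set set \<Rightarrow> 'a set topology" where
  "QP_topology X P =
     topology_generated_by (insert (P_quotient X P) {P_class X P ` V | V. V \<in> P})"

definition P_seq :: "'a topology \<Rightarrow> 'a set set \<Rightarrow> 'a set set" where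
  "P_seq X P = {W. \<exists>U V :: nat \<Rightarrow> 'a set. range U \<subseteq> P \<and> range V \<subseteq> P \<and>
      (\<forall>k. U k \<subseteq> topspace X - V k \<and> topspace X - V k \<subseteq> U (Suc k)) \<and>
      (\<Union>n. U n) = W}"

text \<open>It is a winning strategy in the open-open game if it assigns a non-empty open set to
  every finite sequence of non-empty open sets, and in every play
  A_0 = sigma [], A_(n+1) = sigma [B_0,...,B_n], B_n non-empty open with B_n a subset of A_n,
  the union of the B_n is dense.\<close>
definition winning_strategy_I :: "'a topology \<Rightarrow> ('a set list \<Rightarrow> 'a set) \<Rightarrow> bool" where
  "winning_strategy_I X \<sigma> \<longleftrightarrow>
     (\<forall>bs. (\<forall>b\<in>set bs. openin X b \<and> b \<noteq> {}) \<longrightarrow> openin X (\<sigma> bs) \<and> \<sigma> bs \<noteq> {}) \<and>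
     (\<forall>B :: nat \<Rightarrow> 'a set.
        (\<forall>n. openin X (B n) \<and> B n \<noteq> {} \<and> B n \<subseteq> \<sigma> (map B [0..<n]))
        \<longrightarrow> X closure_of (\<Union>n. B n) = topspace X)"

definition closed_under_strategy :: "'a set set \<Rightarrow> ('a set list \<Rightarrow> 'a set) \<Rightarrow> bool" where
  "closed_under_strategy P \<sigma> \<longleftrightarrow>
     \<sigma> [] \<in> P \<and> (\<forall>bs. bs \<noteq> [] \<and> (\<forall>b\<in>set bs. b \<in> P \<and> b \<noteq> {}) \<longrightarrow> \<sigma> bs \<in> P)"

definition skeletal :: "'a topology \<Rightarrow> 'b topology \<Rightarrow> ('a \<Rightarrow> 'b) \<Rightarrow> bool" where
  "skeletal X Y f \<longleftrightarrow> continuous_map X Y f \<and> f ` topspace X = topspace Y \<and>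
     (\<forall>U. openin X U \<and> U \<noteq> {} \<longrightarrow> Y interior_of (Y closure_of (f ` U)) \<noteq> {})"

end

theory Submission
  imports Defs
begin

text \<open>
  The \<open>Q\<^sub>P\<close>-topology is generated by the sets \<open>q[V]\<close>, \<open>V \<in> P\<close>; since members of \<open>P\<close>
  are unions of classes, these sets form a base closed under finite intersections. Every
  \<open>q[V]\<close> is the union of a chain \<open>q[U\<^sub>n] \<subseteq> X/P - q[V\<^sub>n] \<subseteq> q[U\<^sub>n\<^sub>+\<^sub>1]\<close> of basic sets.
  To separate a point of \<open>q[V]\<close> from the complement of \<open>q[V]\<close>, close \<open>{V}\<close> under
  intersections and under taking these chain members: the resulting countable family generates
  a coarser topology that is regular (by the chains) and second countable, hence normal, and
  Urysohn's lemma applies there.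

  If the closure of \<open>q[U]\<close> had empty interior for a nonempty open \<open>U\<close>, every nonempty member
  of \<open>P\<close> would contain a nonempty member of \<open>P\<close> missing \<open>U\<close>. Answering Player I's strategy
  with such sets gives a play whose union is dense yet misses \<open>U\<close>.
\<close>

lemma countable_closure:
  fixes f :: "'a \<Rightarrow> 'a \<Rightarrow> 'a" and N :: "'a \<Rightarrow> 'a set"
  assumes "countable S" and "\<And>x. countable (N x)"
  obtains C where "countable C" "S \<subseteq> C"
    "\<And>x y. x \<in> C \<Longrightarrow> y \<in> C \<Longrightarrow> f x y \<in> C" "\<And>x. x \<in> C \<Longrightarrow> N x \<subseteq> C"
proof
  define stage where "stage = rec_nat S (\<lambda>_ A. A \<union> case_prod f ` (A \<times> A) \<union> (\<Union>x\<in>A. N x))"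
  have stage_0: "stage 0 = S"
    by (simp add: stage_def)
  have stage_Suc:
    "stage (Suc k) = stage k \<union> case_prod f ` (stage k \<times> stage k) \<union> (\<Union>x\<in>stage k. N x)" for k
    by (simp add: stage_def)
  have stage_mono: "stage i \<subseteq> stage j" if "i \<le> j" for i j
    by (rule lift_Suc_mono_le[of stage, OF _ that]) (unfold stage_Suc, blast)
  show "countable (\<Union>k. stage k)"
  proof (intro countable_UN)
    show "countable (stage k)" for k
      by (induction k) (use assms in \<open>simp_all add: stage_0 stage_Suc\<close>)
  qed simp
  show "S \<subseteq> (\<Union>k. stage k)"
    using stage_0 by blast
  show "f x y \<in> (\<Union>k. stage k)" if xy: "x \<in> (\<Union>k. stage k)" "y \<in> (\<Union>k. stage k)" for x y
  proof -
    obtain i j where "x \<in> stage i" "y \<in> stage j"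
      using xy by blast
    then have "(x, y) \<in> stage (max i j) \<times> stage (max i j)"
      using stage_mono[of i "max i j"] stage_mono[of j "max i j"] by auto
    then have "f x y \<in> stage (Suc (max i j))"
      unfolding stage_Suc by (auto intro: image_eqI[where x = "(x, y)"])
    then show ?thesis
      by (rule UN_I[rotated]) simp
  qed
  show "N x \<subseteq> (\<Union>k. stage k)" if x: "x \<in> (\<Union>k. stage k)" for x
  proof -
    obtain k where "x \<in> stage k"
      using x by blast
    then have "N x \<subseteq> stage (Suc k)"
      unfolding stage_Suc by blast
    then show ?thesis
      by blast
  qed
qed

lemma topology_generated_by_Int_closed_base:
  assumes Int_closed: "\<And>A B. A \<in> \<S> \<Longrightarrow> B \<in> \<S> \<Longrightarrow> A \<inter> B \<in> \<S>"
    and "openin (topology_generated_by \<S>) W" "p \<in> W"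
  shows "\<exists>B\<in>\<S>. p \<in> B \<and> B \<subseteq> W"
proof -
  have "generate_topology_on \<S> W"
    using assms(2) by (rule openin_topology_generated_by)
  then have "\<forall>p\<in>W. \<exists>B\<in>\<S>. p \<in> B \<and> B \<subseteq> W"
  proof induction
    case Empty
    show ?case
      by simp
  next
    case (Basis s)
    then show ?case
      by blast
  next
    case (Int a b)
    show ?case
    proof
      fix p assume p: "p \<in> a \<inter> b"
      then have "p \<in> a" "p \<in> b"
        by simp_all
      obtain A where A: "A \<in> \<S>" "p \<in> A \<and> A \<subseteq> a"
        using bspec[OF Int.IH(1) \<open>p \<in> a\<close>] by (rule bexE)
      obtain B where B: "B \<in> \<S>" "p \<in> B \<and> B \<subseteq> b"
        using bspec[OF Int.IH(2) \<open>p \<in> b\<close>] by (rule bexE)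
      show "\<exists>B\<in>\<S>. p \<in> B \<and> B \<subseteq> a \<inter> b"
      proof
        show "A \<inter> B \<in> \<S>"
          using A(1) B(1) by (rule Int_closed)
        show "p \<in> A \<inter> B \<and> A \<inter> B \<subseteq> a \<inter> b"
          using A(2) B(2) by blast
      qed
    qed
  next
    case (UN K)
    show ?case
    proof
      fix p assume "p \<in> \<Union>K"
      then obtain k where k: "k \<in> K" "p \<in> k"
        by (rule UnionE)
      obtain B where "B \<in> \<S>" "p \<in> B \<and> B \<subseteq> k"
        using bspec[OF UN.IH[OF k(1)] k(2)] by (rule bexE)
      then show "\<exists>B\<in>\<S>. p \<in> B \<and> B \<subseteq> \<Union>K"
        using k(1) by blast
    qed
  qed
  then show ?thesis
    using assms(3) by (rule bspec)
qed

lemma Int_closed_insert: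
  assumes "\<And>A B. A \<in> \<B> \<Longrightarrow> B \<in> \<B> \<Longrightarrow> A \<inter> B \<in> \<B>" and "\<And>B. B \<in> \<B> \<Longrightarrow> B \<subseteq> T"
    and "A \<in> insert T \<B>" "B \<in> insert T \<B>"
  shows "A \<inter> B \<in> insert T \<B>"
proof -
  have "A \<subseteq> T" "B \<subseteq> T"
    using assms(2-4) by auto
  show ?thesis
  proof (cases "A = T")
    case True
    then show ?thesis
      using \<open>B \<subseteq> T\<close> assms(4) by (simp add: Int_absorb1)
  next
    case A: False
    show ?thesis
    proof (cases "B = T")
      case True
      then show ?thesis
        using \<open>A \<subseteq> T\<close> assms(3) by (simp add: Int_absorb2)
    next
      case False
      then show ?thesis
        using A assms(1,3,4) by simp
    qed
  qed
qed

lemma topology_generated_by_insert_base: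
  assumes Int_closed: "\<And>A B. A \<in> \<B> \<Longrightarrow> B \<in> \<B> \<Longrightarrow> A \<inter> B \<in> \<B>"
    and sub: "\<And>B. B \<in> \<B> \<Longrightarrow> B \<subseteq> T"
    and "openin (topology_generated_by (insert T \<B>)) W" "p \<in> W"
  shows "\<exists>B\<in>insert T \<B>. p \<in> B \<and> B \<subseteq> W"
  by (rule topology_generated_by_Int_closed_base[OF Int_closed_insert[OF Int_closed sub] assms(3,4)])

lemma openin_topology_generated_by_mono:
  assumes "\<S> \<subseteq> \<T>" and "openin (topology_generated_by \<S>) U"
  shows "openin (topology_generated_by \<T>) U"
proof -
  have "generate_topology_on \<S> U"
    using assms(2) by (rule openin_topology_generated_by)
  then have "generate_topology_on \<T> U"
  proof induction
    case Empty
    show ?case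
      by (rule generate_topology_on.Empty)
  next
    case (Int a b)
    then show ?case
      by (intro generate_topology_on.Int)
  next
    case (UN K)
    then show ?case
      by (intro generate_topology_on.UN)
  next
    case (Basis s)
    then show ?case
      using assms(1) by (intro generate_topology_on.Basis) blast
  qed
  then show ?thesis
    by (simp add: openin_topology_generated_by_iff)
qed

lemma regular_space_generated_by_seq_base:
  assumes Int_closed: "\<And>A B. A \<in> \<B> \<Longrightarrow> B \<in> \<B> \<Longrightarrow> A \<inter> B \<in> \<B>"
    and sub: "\<And>B. B \<in> \<B> \<Longrightarrow> B \<subseteq> T"
    and seq: "\<B> \<subseteq> P_seq (topology_generated_by (insert T \<B>)) \<B>"
  shows "regular_space (topology_generated_by (insert T \<B>))"
proof -
  define Y where "Y = topology_generated_by (insert T \<B>)"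
  have top: "topspace Y = T"
    using sub by (auto simp: Y_def)
  have "\<exists>U V. openin Y U \<and> closedin Y V \<and> p \<in> U \<and> U \<subseteq> V \<and> V \<subseteq> W"
    if W: "openin Y W" "p \<in> W" for W p
  proof -
    obtain B where B: "B \<in> insert T \<B>" "p \<in> B \<and> B \<subseteq> W"
      using topology_generated_by_insert_base[OF Int_closed sub W[unfolded Y_def]] by (rule bexE)
    show ?thesis
    proof (cases "B = T")
      case True
      have "openin Y T" "closedin Y T"
        using openin_topspace[of Y] closedin_topspace[of Y] top by simp_all
      then show ?thesis
        using B(2) True by (intro exI[of _ T]) auto
    next
      case False
      with B(1) have "B \<in> \<B>"
        by simp
      with seq have "B \<in> P_seq Y \<B>"
        unfolding Y_def by blast
      then obtain u v where uv: "range u \<subseteq> \<B>" "range v \<subseteq> \<B>" "\<And>k. u k \<subseteq> T - v k"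
          "\<And>k. T - v k \<subseteq> u (Suc k)" "(\<Union>n. u n) = B"
        unfolding P_seq_def top by blast
      obtain n where "p \<in> u n"
        using B(2) uv(5) by blast
      have "u n \<in> \<B>" "v n \<in> \<B>"
        using uv(1,2) by auto
      then have "openin Y (u n)" "openin Y (v n)"
        unfolding Y_def by (simp_all add: topology_generated_by_Basis)
      moreover have "closedin Y (T - v n)"
        using closedin_diff[OF closedin_topspace \<open>openin Y (v n)\<close>] top by simp
      moreover have "T - v n \<subseteq> W"
        using uv(4)[of n] uv(5) B(2) by blast
      ultimately show ?thesis
        using \<open>p \<in> u n\<close> uv(3)[of n] by (intro exI[of _ "u n"] exI[of _ "T - v n"]) auto
    qed
  qed
  then show ?thesis
    unfolding Y_def[symmetric] neighbourhood_base_of_closedin[symmetric] neighbourhood_base_of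
    by blast
qed

lemma normal_space_generated_by_countable_seq_base:
  assumes "countable \<B>"
    and Int_closed: "\<And>A B. A \<in> \<B> \<Longrightarrow> B \<in> \<B> \<Longrightarrow> A \<inter> B \<in> \<B>"
    and sub: "\<And>B. B \<in> \<B> \<Longrightarrow> B \<subseteq> T"
    and seq: "\<B> \<subseteq> P_seq (topology_generated_by (insert T \<B>)) \<B>"
  shows "normal_space (topology_generated_by (insert T \<B>))"
proof (rule regular_Lindelof_imp_normal_space)
  show "regular_space (topology_generated_by (insert T \<B>))"
    using Int_closed sub seq by (rule regular_space_generated_by_seq_base)
  have "second_countable (topology_generated_by (insert T \<B>))"
    unfolding second_countable_def
  proof (intro exI conjI ballI allI impI)
    show "countable (insert T \<B>)"
      using assms(1) by simp
    show "openin (topology_generated_by (insert T \<B>)) V" if "V \<in> insert T \<B>" for V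
      using that by (rule topology_generated_by_Basis)
    show "\<exists>V\<in>insert T \<B>. x \<in> V \<and> V \<subseteq> U"
      if "openin (topology_generated_by (insert T \<B>)) U \<and> x \<in> U" for U x
      using topology_generated_by_insert_base[OF Int_closed sub] that by blast
  qed
  then show "Lindelof_space (topology_generated_by (insert T \<B>))"
    by (rule second_countable_imp_Lindelof_space)
qed

lemma countable_seq_subfamily:
  assumes Int_closed: "\<And>A B. A \<in> \<B> \<Longrightarrow> B \<in> \<B> \<Longrightarrow> A \<inter> B \<in> \<B>"
    and sub: "\<And>B. B \<in> \<B> \<Longrightarrow> B \<subseteq> T"
    and seq: "\<B> \<subseteq> P_seq (topology_generated_by (insert T \<B>)) \<B>"
    and "B \<in> \<B>"
  obtains \<C> where "countable \<C>" "B \<in> \<C>" "\<C> \<subseteq> \<B>"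
    "\<And>A A'. A \<in> \<C> \<Longrightarrow> A' \<in> \<C> \<Longrightarrow> A \<inter> A' \<in> \<C>" "\<C> \<subseteq> P_seq (topology_generated_by (insert T \<C>)) \<C>"
proof -
  have top: "topspace (topology_generated_by (insert T \<C>)) = T" if "\<C> \<subseteq> \<B>" for \<C>
    using that sub by auto
  have "\<forall>A\<in>\<B>. \<exists>u v. range u \<subseteq> \<B> \<and> range v \<subseteq> \<B> \<and>
      (\<forall>k. u k \<subseteq> T - v k \<and> T - v k \<subseteq> u (Suc k)) \<and> (\<Union>n. u n) = A"
    using seq unfolding P_seq_def top[OF order_refl] by blast
  then obtain inner outer where io: "\<And>A. A \<in> \<B> \<Longrightarrow>
      range (inner A) \<subseteq> \<B> \<and> range (outer A) \<subseteq> \<B> \<and>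
      (\<forall>k. inner A k \<subseteq> T - outer A k \<and> T - outer A k \<subseteq> inner A (Suc k)) \<and> (\<Union>n. inner A n) = A"
    by metis
  obtain C where C: "countable C" "{B} \<subseteq> C" "\<And>A A'. A \<in> C \<Longrightarrow> A' \<in> C \<Longrightarrow> A \<inter> A' \<in> C"
      "\<And>A. A \<in> C \<Longrightarrow> range (inner A) \<union> range (outer A) \<subseteq> C"
    by (rule countable_closure[of "{B}" "\<lambda>A. range (inner A) \<union> range (outer A)" "(\<inter>)"]) auto
  show thesis
  proof (rule that[of "C \<inter> \<B>"])
    show "countable (C \<inter> \<B>)"
      using C(1) by (rule countable_subset[rotated]) blast
    show "B \<in> C \<inter> \<B>" "C \<inter> \<B> \<subseteq> \<B>"
      using C(2) assms(4) by auto
    show "A \<inter> A' \<in> C \<inter> \<B>" if "A \<in> C \<inter> \<B>" "A' \<in> C \<inter> \<B>" for A A'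
      using C(3)[of A A'] Int_closed[of A A'] that by blast
    show "C \<inter> \<B> \<subseteq> P_seq (topology_generated_by (insert T (C \<inter> \<B>))) (C \<inter> \<B>)"
    proof
      fix A assume A: "A \<in> C \<inter> \<B>"
      then have "range (inner A) \<subseteq> C \<inter> \<B>" "range (outer A) \<subseteq> C \<inter> \<B>"
        using io[of A] C(4)[of A] by auto
      then show "A \<in> P_seq (topology_generated_by (insert T (C \<inter> \<B>))) (C \<inter> \<B>)"
        unfolding P_seq_def top[OF Int_lower2] using io[of A] A by blast
    qed
  qed
qed

lemma Urysohn_generated_by_seq_base:
  fixes \<B> :: "'a set set"
  assumes Int_closed: "\<And>A B. A \<in> \<B> \<Longrightarrow> B \<in> \<B> \<Longrightarrow> A \<inter> B \<in> \<B>"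
    and sub: "\<And>B. B \<in> \<B> \<Longrightarrow> B \<subseteq> T"
    and seq: "\<B> \<subseteq> P_seq (topology_generated_by (insert T \<B>)) \<B>"
    and "B \<in> \<B>" "p \<in> B"
  obtains f :: "'a \<Rightarrow> real"
  where "continuous_map (topology_generated_by (insert T \<B>)) (top_of_set {0..1}) f"
    "f p = 0" "f ` (T - B) \<subseteq> {1}"
proof -
  obtain \<C> where \<C>: "countable \<C>" "B \<in> \<C>" "\<C> \<subseteq> \<B>"
      "\<And>A A'. A \<in> \<C> \<Longrightarrow> A' \<in> \<C> \<Longrightarrow> A \<inter> A' \<in> \<C>" "\<C> \<subseteq> P_seq (topology_generated_by (insert T \<C>)) \<C>"
    using countable_seq_subfamily[OF Int_closed sub seq \<open>B \<in> \<B>\<close>] by blast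
  define Z where "Z = topology_generated_by (insert T \<C>)"
  have sub_\<C>: "A \<subseteq> T" if "A \<in> \<C>" for A
    using that \<C>(3) sub by blast
  have topZ: "topspace Z = T"
    using sub_\<C> by (auto simp: Z_def)
  have "normal_space Z"
    unfolding Z_def using \<C>(1) \<C>(4) sub_\<C> \<C>(5) by (rule normal_space_generated_by_countable_seq_base)
  have "B \<in> P_seq Z \<C>"
    using \<C>(5) \<C>(2) unfolding Z_def by (rule subsetD)
  then obtain u v where uv: "range u \<subseteq> \<C>" "range v \<subseteq> \<C>"
      "\<forall>k. u k \<subseteq> T - v k \<and> T - v k \<subseteq> u (Suc k)" "(\<Union>n. u n) = B"
    unfolding P_seq_def topZ by blast
  obtain n where "p \<in> u n"
    using \<open>p \<in> B\<close> uv(4) by blast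
  have "v n \<in> \<C>"
    using uv(2) by auto
  then have "openin Z (v n)" "openin Z B"
    unfolding Z_def using \<C>(2) by (simp_all add: topology_generated_by_Basis)
  then have closed: "closedin Z (T - v n)" "closedin Z (T - B)"
    using closedin_diff[OF closedin_topspace[of Z]] topZ by simp_all
  have "T - v n \<subseteq> B"
    using uv(3,4) by blast
  then have disj: "disjnt (T - v n) (T - B)"
    by (auto simp: disjnt_def)
  obtain f :: "'a \<Rightarrow> real"
    where f: "continuous_map Z (top_of_set {0..1}) f" "f ` (T - v n) \<subseteq> {0}" "f ` (T - B) \<subseteq> {1}"
    by (rule Urysohn_lemma[where a = 0 and b = 1, OF \<open>normal_space Z\<close> closed disj zero_le_one])
  have "openin (topology_generated_by (insert T \<B>)) U" if "openin Z U" for U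
    by (rule openin_topology_generated_by_mono[OF _ that[unfolded Z_def]]) (use \<C>(3) in blast)
  then have "continuous_map (topology_generated_by (insert T \<B>)) Z id"
    using topology_finer_continuous_id[of Z "topology_generated_by (insert T \<B>)"] topZ sub by auto
  then have "continuous_map (topology_generated_by (insert T \<B>)) (top_of_set {0..1}) f"
    using continuous_map_compose[OF _ f(1)] by (metis comp_id)
  moreover have "p \<in> T - v n"
    using \<open>p \<in> u n\<close> uv(3) by blast
  then have "f p = 0"
    using f(2) by blast
  ultimately show thesis
    using that f(3) by blast
qed

lemma completely_regular_space_generated_by_seq_base:
  fixes \<B> :: "'a set set"
  assumes Int_closed: "\<And>A B. A \<in> \<B> \<Longrightarrow> B \<in> \<B> \<Longrightarrow> A \<inter> B \<in> \<B>"
    and sub: "\<And>B. B \<in> \<B> \<Longrightarrow> B \<subseteq> T"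
    and seq: "\<B> \<subseteq> P_seq (topology_generated_by (insert T \<B>)) \<B>"
  shows "completely_regular_space (topology_generated_by (insert T \<B>))"
  unfolding completely_regular_space_def
proof (intro allI impI)
  define Y where "Y = topology_generated_by (insert T \<B>)"
  have top: "topspace Y = T"
    using sub by (auto simp: Y_def)
  fix S p
  assume "closedin (topology_generated_by (insert T \<B>)) S \<and> p \<in> topspace (topology_generated_by (insert T \<B>)) - S"
  then have S: "closedin Y S" "p \<in> T - S"
    unfolding Y_def[symmetric] top by auto
  then have "openin Y (T - S)"
    using top by (simp add: closedin_def)
  obtain B where B: "B \<in> insert T \<B>" "p \<in> B \<and> B \<subseteq> T - S"
    using topology_generated_by_insert_base[OF Int_closed sub \<open>openin Y (T - S)\<close>[unfolded Y_def] S(2)]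
    by (rule bexE)
  have "S \<subseteq> T - B"
    using B(2) closedin_subset[OF S(1)] top by blast
  show "\<exists>f. continuous_map Y (top_of_set {0..1::real}) f \<and> f p = 0 \<and> f ` S \<subseteq> {1}"
  proof (cases "B = T")
    case True
    with \<open>S \<subseteq> T - B\<close> have "S = {}"
      by blast
    then show ?thesis
      by (intro exI[of _ "\<lambda>_. 0"]) simp
  next
    case False
    with B(1) have "B \<in> \<B>"
      by simp
    obtain f :: "'a \<Rightarrow> real" where "continuous_map Y (top_of_set {0..1}) f" "f p = 0" "f ` (T - B) \<subseteq> {1}"
      by (rule Urysohn_generated_by_seq_base[OF Int_closed sub seq \<open>B \<in> \<B>\<close> conjunct1[OF B(2)],
            folded Y_def])
    then show ?thesis
      using \<open>S \<subseteq> T - B\<close> by blast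
  qed
qed

lemma QP_topology_eq:
  "QP_topology X P =
     topology_generated_by (insert (P_class X P ` topspace X) ((\<lambda>V. P_class X P ` V) ` P))"
  unfolding QP_topology_def P_quotient_def by (simp add: Setcompr_eq_image)

lemma P_class_in_image_iff:
  assumes "V \<in> P" "x \<in> topspace X"
  shows "P_class X P x \<in> P_class X P ` V \<longleftrightarrow> x \<in> V"
proof
  assume "P_class X P x \<in> P_class X P ` V"
  then obtain y where "y \<in> V" "P_class X P x = P_class X P y"
    by blast
  moreover have "x \<in> P_class X P x"
    using assms(2) by (simp add: P_class_def)
  ultimately show "x \<in> V"
    using assms(1) by (simp add: P_class_def)
qed simp

lemma P_class_image_Int:
  assumes "A \<in> P" "B \<in> P" "A \<subseteq> topspace X"
  shows "P_class X P ` (A \<inter> B) = P_class X P ` A \<inter> P_class X P ` B"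
  using assms P_class_in_image_iff[of B P _ X] by blast

lemma P_class_image_Diff:
  assumes "V \<in> P"
  shows "P_class X P ` topspace X - P_class X P ` V = P_class X P ` (topspace X - V)"
proof (intro equalityI subsetI)
  fix p assume "p \<in> P_class X P ` topspace X - P_class X P ` V"
  then obtain x where "x \<in> topspace X" "p = P_class X P x" "P_class X P x \<notin> P_class X P ` V"
    by blast
  then show "p \<in> P_class X P ` (topspace X - V)"
    using P_class_in_image_iff[OF assms \<open>x \<in> topspace X\<close>] by blast
next
  fix p assume "p \<in> P_class X P ` (topspace X - V)"
  then obtain x where "x \<in> topspace X" "x \<notin> V" "p = P_class X P x"
    by blast
  then show "p \<in> P_class X P ` topspace X - P_class X P ` V"
    using P_class_in_image_iff[OF assms \<open>x \<in> topspace X\<close>] by blast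
qed

lemma topspace_QP_topology:
  assumes "\<forall>V\<in>P. openin X V"
  shows "topspace (QP_topology X P) = P_class X P ` topspace X"
  using assms openin_subset by (fastforce simp: QP_topology_eq)

lemma P_class_image_P_seq:
  assumes P_open: "\<forall>V\<in>P. openin X V" and "W \<in> P_seq X P"
  shows "P_class X P ` W \<in> P_seq (QP_topology X P) ((\<lambda>V. P_class X P ` V) ` P)"
proof -
  let ?q = "P_class X P"
  obtain u v where uv: "range u \<subseteq> P" "range v \<subseteq> P"
      "\<forall>k. u k \<subseteq> topspace X - v k \<and> topspace X - v k \<subseteq> u (Suc k)" "(\<Union>n. u n) = W"
    using assms(2) unfolding P_seq_def by blast
  show ?thesis
    unfolding P_seq_def topspace_QP_topology[OF P_open] mem_Collect_eq
  proof (intro exI conjI allI)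
    show "range (\<lambda>n. ?q ` u n) \<subseteq> (\<lambda>V. ?q ` V) ` P" "range (\<lambda>n. ?q ` v n) \<subseteq> (\<lambda>V. ?q ` V) ` P"
      using uv(1,2) by blast+
    show "?q ` u k \<subseteq> ?q ` topspace X - ?q ` v k" for k
      unfolding P_class_image_Diff[OF rangeI[THEN subsetD[OF uv(2)]]] using uv(3) by blast
    show "?q ` topspace X - ?q ` v k \<subseteq> ?q ` u (Suc k)" for k
      unfolding P_class_image_Diff[OF rangeI[THEN subsetD[OF uv(2)]]] using uv(3) by blast
    show "(\<Union>n. ?q ` u n) = ?q ` W"
      using uv(4) by blast
  qed
qed

lemma QP_base_Int_closed:
  assumes P_open: "\<forall>V\<in>P. openin X V" and P_Int: "\<forall>U\<in>P. \<forall>V\<in>P. U \<inter> V \<in> P"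
    and "A' \<in> (\<lambda>V. P_class X P ` V) ` P" "B' \<in> (\<lambda>V. P_class X P ` V) ` P"
  shows "A' \<inter> B' \<in> (\<lambda>V. P_class X P ` V) ` P"
proof -
  obtain A B where AB: "A \<in> P" "B \<in> P" "A' = P_class X P ` A" "B' = P_class X P ` B"
    using assms(3,4) by blast
  have "A \<subseteq> topspace X"
    using P_open AB(1) openin_subset by blast
  then have "A' \<inter> B' = P_class X P ` (A \<inter> B)"
    by (simp add: AB(3,4) P_class_image_Int[OF AB(1,2)])
  moreover have "A \<inter> B \<in> P"
    using P_Int AB(1,2) by blast
  ultimately show ?thesis
    by blast
qed

lemma QP_base_subset:
  assumes "\<forall>V\<in>P. openin X V" and "B' \<in> (\<lambda>V. P_class X P ` V) ` P"
  shows "B' \<subseteq> P_class X P ` topspace X"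
  using assms openin_subset by blast

lemma QP_topology_base:
  assumes P_open: "\<forall>V\<in>P. openin X V" and P_Int: "\<forall>U\<in>P. \<forall>V\<in>P. U \<inter> V \<in> P"
    and "openin (QP_topology X P) W" "p \<in> W"
  shows "\<exists>G\<in>insert (P_class X P ` topspace X) ((\<lambda>V. P_class X P ` V) ` P). p \<in> G \<and> G \<subseteq> W"
proof -
  have "A' \<inter> B' \<in> (\<lambda>V. P_class X P ` V) ` P"
    if "A' \<in> (\<lambda>V. P_class X P ` V) ` P" "B' \<in> (\<lambda>V. P_class X P ` V) ` P" for A' B'
    using P_open P_Int that by (rule QP_base_Int_closed)
  moreover have "B' \<subseteq> P_class X P ` topspace X" if "B' \<in> (\<lambda>V. P_class X P ` V) ` P" for B'
    using P_open that by (rule QP_base_subset)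
  ultimately show ?thesis
    using topology_generated_by_insert_base assms(3,4) unfolding QP_topology_eq by metis
qed

theorem completely_regular_space_QP_topology:
  assumes P_open: "\<forall>V\<in>P. openin X V" and P_Int: "\<forall>U\<in>P. \<forall>V\<in>P. U \<inter> V \<in> P"
    and seq: "P \<subseteq> P_seq X P"
  shows "completely_regular_space (QP_topology X P)"
  unfolding QP_topology_eq
proof (rule completely_regular_space_generated_by_seq_base)
  show "(\<lambda>V. P_class X P ` V) ` P
      \<subseteq> P_seq (topology_generated_by (insert (P_class X P ` topspace X) ((\<lambda>V. P_class X P ` V) ` P)))
          ((\<lambda>V. P_class X P ` V) ` P)"
    using seq P_class_image_P_seq[OF P_open] unfolding QP_topology_eq by blast
qed (use QP_base_Int_closed[OF P_open P_Int] QP_base_subset[OF P_open] in auto)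

lemma continuous_map_P_class:
  assumes P_open: "\<forall>V\<in>P. openin X V"
  shows "continuous_map X (QP_topology X P) (P_class X P)"
  unfolding QP_topology_eq
proof (rule continuous_on_generated_topo)
  fix U assume "U \<in> insert (P_class X P ` topspace X) ((\<lambda>V. P_class X P ` V) ` P)"
  then consider "U = P_class X P ` topspace X" | V where "V \<in> P" "U = P_class X P ` V"
    by blast
  then show "openin X (P_class X P -` U \<inter> topspace X)"
  proof cases
    case 1
    then have "P_class X P -` U \<inter> topspace X = topspace X"
      by blast
    then show ?thesis
      by simp
  next
    case 2
    then have "P_class X P -` U \<inter> topspace X = V"
      using P_class_in_image_iff[OF 2(1)] P_open openin_subset by blast
    then show ?thesis
      using P_open 2(1) by simp
  qed
qed auto

lemma QP_topology_base_within:
  assumes P_open: "\<forall>V\<in>P. openin X V" and P_Int: "\<forall>U\<in>P. \<forall>V\<in>P. U \<inter> V \<in> P"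
    and "openin (QP_topology X P) W" "W \<subseteq> P_class X P ` A" "A \<in> P" "p \<in> W"
  obtains V where "V \<in> P" "p \<in> P_class X P ` V" "P_class X P ` V \<subseteq> W"
proof -
  obtain G where G: "G \<in> insert (P_class X P ` topspace X) ((\<lambda>V. P_class X P ` V) ` P)" "p \<in> G \<and> G \<subseteq> W"
    using QP_topology_base[OF P_open P_Int assms(3,6)] by (rule bexE)
  show thesis
  proof (cases "G = P_class X P ` topspace X")
    case True
    have "P_class X P ` A \<subseteq> W"
      using True G(2) P_open \<open>A \<in> P\<close> openin_subset by blast
    then show thesis
      using that[of A] \<open>A \<in> P\<close> assms(4,6) by blast
  next
    case False
    then obtain V where "V \<in> P" "G = P_class X P ` V"
      using G(1) by blast
    then show thesis
      using that G(2) by blast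
  qed
qed

lemma P_subset_disjoint_from_nowhere_dense_image:
  assumes P_open: "\<forall>V\<in>P. openin X V" and P_Int: "\<forall>U\<in>P. \<forall>V\<in>P. U \<inter> V \<in> P"
    and nowhere_dense: "QP_topology X P interior_of (QP_topology X P closure_of (P_class X P ` U)) = {}"
    and "A \<in> P" "A \<noteq> {}"
  shows "\<exists>B\<in>P. B \<noteq> {} \<and> B \<subseteq> A \<and> B \<inter> U = {}"
proof -
  let ?q = "P_class X P" and ?Y = "QP_topology X P"
  let ?C = "?Y closure_of (?q ` U)"
  have "openin ?Y (?q ` A)"
    unfolding QP_topology_eq using \<open>A \<in> P\<close> by (simp add: topology_generated_by_Basis)
  then have opn: "openin ?Y (?q ` A - ?C)"
    by (simp add: openin_diff)
  have "?q ` A - ?C \<noteq> {}"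
  proof
    assume "?q ` A - ?C = {}"
    then have "?q ` A \<subseteq> ?Y interior_of ?C"
      using \<open>openin ?Y (?q ` A)\<close> by (simp add: interior_of_maximal)
    with nowhere_dense \<open>A \<noteq> {}\<close> show False
      by simp
  qed
  then obtain p where p: "p \<in> ?q ` A - ?C"
    by blast
  obtain V where V: "V \<in> P" "p \<in> ?q ` V" "?q ` V \<subseteq> ?q ` A - ?C"
    using QP_topology_base_within[OF P_open P_Int opn Diff_subset \<open>A \<in> P\<close> p] .
  then obtain x where x: "x \<in> V" "p = ?q x"
    by blast
  have V_sub: "V \<subseteq> topspace X"
    using P_open V(1) openin_subset by blast
  have "x \<in> A"
    using V(3) x P_class_in_image_iff[OF \<open>A \<in> P\<close>, of x X] V_sub by blast
  have "V \<inter> U = {}"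
  proof (rule ccontr)
    assume "V \<inter> U \<noteq> {}"
    then obtain y where y: "y \<in> V" "y \<in> U"
      by blast
    have "?q y \<in> topspace ?Y \<inter> ?q ` U"
      using y V_sub topspace_QP_topology[OF P_open] by blast
    then have "?q y \<in> ?C"
      by (rule subsetD[OF closure_of_subset_Int])
    moreover have "?q y \<notin> ?C"
      using V(3) y(1) by blast
    ultimately show False
      by blast
  qed
  moreover have "V \<inter> A \<in> P"
    using P_Int V(1) \<open>A \<in> P\<close> by blast
  ultimately show ?thesis
    using x(1) \<open>x \<in> A\<close> by (intro bexI[of _ "V \<inter> A"]) auto
qed

lemma winning_strategy_avoidable_open_empty:
  assumes win: "winning_strategy_I X \<sigma>" and closed: "closed_under_strategy P \<sigma>"
    and P_open: "\<forall>V\<in>P. openin X V" and U: "openin X U"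
    and avoid: "\<And>A. A \<in> P \<Longrightarrow> A \<noteq> {} \<Longrightarrow> \<exists>B\<in>P. B \<noteq> {} \<and> B \<subseteq> A \<and> B \<inter> U = {}"
  shows "U = {}"
proof -
  obtain reply where reply: "\<And>A. A \<in> P \<Longrightarrow> A \<noteq> {} \<Longrightarrow>
      reply A \<in> P \<and> reply A \<noteq> {} \<and> reply A \<subseteq> A \<and> reply A \<inter> U = {}"
    using avoid by metis
  have strategy_move: "openin X (\<sigma> bs) \<and> \<sigma> bs \<noteq> {}" if "\<forall>b\<in>set bs. openin X b \<and> b \<noteq> {}" for bs
    using conjunct1[OF win[unfolded winning_strategy_I_def]] that by blast
  have strategy_dense: "X closure_of (\<Union>n. B n) = topspace X"
    if "\<forall>n. openin X (B n) \<and> B n \<noteq> {} \<and> B n \<subseteq> \<sigma> (map B [0..<n])" for B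
    using conjunct2[OF win[unfolded winning_strategy_I_def]] that by blast
  have move: "\<sigma> bs \<in> P \<and> \<sigma> bs \<noteq> {}" if bs: "\<forall>b\<in>set bs. b \<in> P \<and> b \<noteq> {}" for bs
  proof
    show "\<sigma> bs \<in> P"
      using closed bs unfolding closed_under_strategy_def by (cases bs) auto
    have "\<forall>b\<in>set bs. openin X b \<and> b \<noteq> {}"
      using bs P_open by blast
    then show "\<sigma> bs \<noteq> {}"
      using strategy_move by blast
  qed
  define play where "play = rec_nat [] (\<lambda>_ bs. bs @ [reply (\<sigma> bs)])"
  define B where "B n = reply (\<sigma> (play n))" for n
  have play: "play n = map B [0..<n]" for n
    by (induction n) (simp_all add: play_def B_def)
  have legal: "B n \<in> P \<and> B n \<noteq> {} \<and> B n \<subseteq> \<sigma> (map B [0..<n]) \<and> B n \<inter> U = {}" for n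
  proof (induction n rule: less_induct)
    case (less n)
    then have "\<forall>b\<in>set (play n). b \<in> P \<and> b \<noteq> {}"
      by (auto simp: play)
    then have "\<sigma> (play n) \<in> P \<and> \<sigma> (play n) \<noteq> {}"
      by (rule move)
    then have "B n \<in> P \<and> B n \<noteq> {} \<and> B n \<subseteq> \<sigma> (play n) \<and> B n \<inter> U = {}"
      unfolding B_def using reply by blast
    then show ?case
      unfolding play[symmetric] .
  qed
  then have "X closure_of (\<Union>n. B n) = topspace X"
    using P_open by (intro strategy_dense) blast
  moreover have "U \<inter> (\<Union>n. B n) = {}"
    using legal by blast
  ultimately have "U \<inter> topspace X = {}"
    using openin_Int_closure_of_eq_empty[OF U] by metis
  then show ?thesis
    using openin_subset[OF U] by blast
qed

theorem skeletal_P_class: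
  assumes P_open: "\<forall>V\<in>P. openin X V" and P_Int: "\<forall>U\<in>P. \<forall>V\<in>P. U \<inter> V \<in> P"
    and win: "winning_strategy_I X \<sigma>" and closed: "closed_under_strategy P \<sigma>"
  shows "skeletal X (QP_topology X P) (P_class X P)"
  unfolding skeletal_def
proof (intro conjI allI impI)
  show "continuous_map X (QP_topology X P) (P_class X P)"
    using P_open by (rule continuous_map_P_class)
  show "P_class X P ` topspace X = topspace (QP_topology X P)"
    using P_open by (simp add: topspace_QP_topology)
  fix U assume U: "openin X U \<and> U \<noteq> {}"
  show "QP_topology X P interior_of (QP_topology X P closure_of (P_class X P ` U)) \<noteq> {}"
  proof
    assume "QP_topology X P interior_of (QP_topology X P closure_of (P_class X P ` U)) = {}"
    then have "U = {}"
      using winning_strategy_avoidable_open_empty[OF win closed P_open conjunct1[OF U]]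
        P_subset_disjoint_from_nowhere_dense_image[OF P_open P_Int] by blast
    with U show False
      by blast
  qed
qed

theorem theorem7:
  fixes X :: "'a topology" and P :: "'a set set" and \<sigma> :: "'a set list \<Rightarrow> 'a set"
  assumes P_open: "\<forall>V\<in>P. openin X V"
    and P_Un: "\<forall>U\<in>P. \<forall>V\<in>P. U \<union> V \<in> P"
    and P_Int: "\<forall>U\<in>P. \<forall>V\<in>P. U \<inter> V \<in> P"
    and win: "winning_strategy_I X \<sigma>"
    and closed: "closed_under_strategy P \<sigma>"
    and seq: "P \<subseteq> P_seq X P"
  shows "completely_regular_space (QP_topology X P) \<and>
         skeletal X (QP_topology X P) (P_class X P)"
  using completely_regular_space_QP_topology[OF P_open P_Int seq]
    skeletal_P_class[OF P_open P_Int win closed] ..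

end
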